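(* Let $A=(A_1,\dots,A_d)$ be a random vector with values in $\{0,1\}^d$ whose joint distribution is generated by a linear triangular system, namely $\Pr(A_1=a_1)=\tfrac12$ for $a_1\in\{0,1\}$ and, for each $s=2,\dots,d$ and all $(a_1,\dots,a_s)\in\{0,1\}^s$, $$\Pr(A_s=a_s\mid A_1=a_1,\dots,A_{s-1}=a_{s-1})=\tfrac12\Big(1+\sum_{j=1}^{s-1}\beta_{sj}(-1)^{a_s+a_j}\Big)$$ for real coefficients $\beta_{sj}$ (such that these are valid conditional probabilities), the joint distribution being $\Pr(A=a)=\Pr(A_1=a_1)\prod_{s=2}^d\Pr(A_s=a_s\mid A_1=a_1,\dots,A_{s-1}=a_{s-1})$. Then the distribution of $A$ is palindromic, i.e. $\Pr(A=a)=\Pr(A=\sim a)$ for all $a\in\{0,1\}^d$.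
   Context: $\sim a$ denotes the complement of the binary vector $a$, i.e. $(\sim a)_v=1-a_v$. *)

theory Defs
  imports Main "HOL.Real"
begin

text \<open>Binary vectors a in {0,1}^d are represented as functions a :: nat => nat,
  with coordinates a 1, ..., a d taking values in {0,1}; other coordinates are ignored.\<close>

definition binvec :: "nat \<Rightarrow> (nat \<Rightarrow> nat) \<Rightarrow> bool" where
  "binvec d a \<longleftrightarrow> (\<forall>i\<in>{1..d}. a i \<in> {0, 1})"

definition compl_vec :: "(nat \<Rightarrow> nat) \<Rightarrow> (nat \<Rightarrow> nat)" where
  "compl_vec a = (\<lambda>v. 1 - a v)"

definition cond_prob :: "(nat \<Rightarrow> nat \<Rightarrow> real) \<Rightarrow> nat \<Rightarrow> (nat \<Rightarrow> nat) \<Rightarrow> real" where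
  "cond_prob \<beta> s a = (1/2) * (1 + (\<Sum>j=1..s-1. \<beta> s j * (-1::real) ^ (a s + a j)))"

text \<open>Joint distribution Pr(A = a) = Pr(A_1 = a_1) * prod_{s=2}^d Pr(A_s = a_s | ...).\<close>
definition joint_prob :: "(nat \<Rightarrow> nat \<Rightarrow> real) \<Rightarrow> nat \<Rightarrow> (nat \<Rightarrow> nat) \<Rightarrow> real" where
  "joint_prob \<beta> d a = (1/2) * (\<Prod>s=2..d. cond_prob \<beta> s a)"

definition valid_coeffs :: "(nat \<Rightarrow> nat \<Rightarrow> real) \<Rightarrow> nat \<Rightarrow> bool" where
  "valid_coeffs \<beta> d \<longleftrightarrow>
     (\<forall>s\<in>{2..d}. \<forall>a. binvec s a \<longrightarrow> 0 \<le> cond_prob \<beta> s a \<and> cond_prob \<beta> s a \<le> 1)"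

end

theory Submission
  imports Defs
begin

text \<open>Each conditional probability depends on a only through the parities of the sums
  a s + a j, and complementing both bits changes such a sum by 2 - 2(a s + a j),
  leaving its parity unchanged. Hence every factor of the joint distribution is
  invariant under complementation.\<close>

lemma minus_one_power_compl_bits:
  assumes "x \<in> {0, 1::nat}" and "y \<in> {0, 1::nat}"
  shows "(-1::real) ^ ((1 - x) + (1 - y)) = (-1) ^ (x + y)"
  using assms by auto

lemma cond_prob_compl_vec:
  assumes "binvec s a"
  shows "cond_prob \<beta> s (compl_vec a) = cond_prob \<beta> s a"
proof -
  have "\<beta> s j * (-1::real) ^ (compl_vec a s + compl_vec a j) = \<beta> s j * (-1) ^ (a s + a j)"
    if "j \<in> {1..s-1}" for j
  proof -
    have "a s \<in> {0, 1}" "a j \<in> {0, 1}"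
      using assms that by (auto simp: binvec_def)
    then show ?thesis
      unfolding compl_vec_def by (simp only: minus_one_power_compl_bits)
  qed
  then show ?thesis
    unfolding cond_prob_def by (metis (no_types, lifting) sum.cong)
qed

lemma binvec_mono:
  assumes "binvec d a" and "s \<le> d"
  shows "binvec s a"
  using assms by (auto simp: binvec_def)

theorem proposition2p4:
  fixes d :: nat and \<beta> :: "nat \<Rightarrow> nat \<Rightarrow> real" and a :: "nat \<Rightarrow> nat"
  assumes "d \<ge> 1"
    and "valid_coeffs \<beta> d"
    and "binvec d a"
  shows "joint_prob \<beta> d a = joint_prob \<beta> d (compl_vec a)"
proof -
  have "cond_prob \<beta> s (compl_vec a) = cond_prob \<beta> s a" if "s \<in> {2..d}" for s
    using that assms(3) by (simp add: binvec_mono cond_prob_compl_vec)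
  then show ?thesis
    unfolding joint_prob_def by (metis (no_types, lifting) prod.cong)
qed

end
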